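(* Let $X$ be a paracompact Hausdorff homologically locally connected topological space. Then every singular cohomology class $\xi\in H^1(X;\mathbb{R})$ is the cohomology class of some continuous closed 1-form on $X$.
   Context: $X$ is homologically locally connected if for every $x\in X$ and every neighborhood $U$ of $x$ there is a neighborhood $V\subset U$ of $x$ such that $\tilde H_q(V)\to\tilde H_q(U)$ is trivial for all $q$. A continuous closed 1-form on $X$ is a collection $\{f_U\}_{U\in\mathcal U}$ of continuous functions $f_U:U\to\mathbb{R}$, $\mathcal U$ an open cover, with $f_U-f_V$ locally constant on $U\cap V$ (up to the obvious equivalence). For a path $\gamma:[0,1]\to X$, $\int_\gamma\omega=\sum_{i}[f_{U_i}(\gamma(t_{i+1}))-f_{U_i}(\gamma(t_i))]$ for a subdivision with $\gamma[t_i,t_{i+1}]\subset U_i\in\mathcal U$. The cohomology class of $\omega$ is the element of $\mathrm{Hom}(H_1(X);\mathbb{R})=H^1(X;\mathbb{R})$ given by the homomorphism of periods $[\gamma]\mapsto\int_\gamma\omega$ on loops. *)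

theory Defs
  imports "HOL-Homology.Homology"
begin

definition paracompact_space :: "'a topology \<Rightarrow> bool" where
  "paracompact_space X \<longleftrightarrow>
     (\<forall>\<U>. (\<forall>U\<in>\<U>. openin X U) \<and> \<Union>\<U> = topspace X \<longrightarrow>
        (\<exists>\<V>. (\<forall>V\<in>\<V>. openin X V) \<and> \<Union>\<V> = topspace X \<and>
              (\<forall>V\<in>\<V>. \<exists>U\<in>\<U>. V \<subseteq> U) \<and> locally_finite_in X \<V>))"

definition nbhd_in :: "'a topology \<Rightarrow> 'a \<Rightarrow> 'a set \<Rightarrow> bool" where
  "nbhd_in X x N \<longleftrightarrow> N \<subseteq> topspace X \<and> (\<exists>W. openin X W \<and> x \<in> W \<and> W \<subseteq> N)"

definition homologically_locally_connected :: "'a topology \<Rightarrow> bool" where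
  "homologically_locally_connected X \<longleftrightarrow>
     (\<forall>x\<in>topspace X. \<forall>U. nbhd_in X x U \<longrightarrow>
        (\<exists>V. nbhd_in X x V \<and> V \<subseteq> U \<and>
          (\<forall>q::int. \<forall>c\<in>carrier (reduced_homology_group q (subtopology X V)).
              hom_induced q (subtopology X V) {} (subtopology X U) {} id c
                = \<one>\<^bsub>homology_group q (subtopology X U)\<^esub>)))"

text \<open>A continuous closed 1-form given by a family of local functions f U, U in the open cover \<U>.\<close>
definition closed_1form :: "'a topology \<Rightarrow> 'a set set \<Rightarrow> ('a set \<Rightarrow> 'a \<Rightarrow> real) \<Rightarrow> bool" where
  "closed_1form X \<U> f \<longleftrightarrow>
     (\<forall>U\<in>\<U>. openin X U) \<and> \<Union>\<U> = topspace X \<and>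
     (\<forall>U\<in>\<U>. continuous_map (subtopology X U) euclideanreal (f U)) \<and>
     (\<forall>U\<in>\<U>. \<forall>V\<in>\<U>. \<forall>x\<in>U \<inter> V. \<exists>W. openin X W \<and> x \<in> W \<and> W \<subseteq> U \<inter> V \<and>
         (\<forall>y\<in>W. f U y - f V y = f U x - f V x))"

definition admissible_subdivision ::
    "'a set set \<Rightarrow> (real \<Rightarrow> 'a) \<Rightarrow> nat \<Rightarrow> (nat \<Rightarrow> real) \<Rightarrow> (nat \<Rightarrow> 'a set) \<Rightarrow> bool" where
  "admissible_subdivision \<U> \<gamma> n t Us \<longleftrightarrow>
     t 0 = 0 \<and> t n = 1 \<and> (\<forall>i<n. t i \<le> t (Suc i)) \<and>
     (\<forall>i<n. Us i \<in> \<U> \<and> \<gamma> ` {t i..t (Suc i)} \<subseteq> Us i)"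

definition subdivision_sum ::
    "('a set \<Rightarrow> 'a \<Rightarrow> real) \<Rightarrow> (real \<Rightarrow> 'a) \<Rightarrow> nat \<Rightarrow> (nat \<Rightarrow> real) \<Rightarrow> (nat \<Rightarrow> 'a set) \<Rightarrow> real" where
  "subdivision_sum f \<gamma> n t Us = (\<Sum>i<n. f (Us i) (\<gamma> (t (Suc i))) - f (Us i) (\<gamma> (t i)))"

definition form_integral_is ::
    "'a set set \<Rightarrow> ('a set \<Rightarrow> 'a \<Rightarrow> real) \<Rightarrow> (real \<Rightarrow> 'a) \<Rightarrow> real \<Rightarrow> bool" where
  "form_integral_is \<U> f \<gamma> r \<longleftrightarrow>
     (\<exists>n t Us. admissible_subdivision \<U> \<gamma> n t Us) \<and>
     (\<forall>n t Us. admissible_subdivision \<U> \<gamma> n t Us \<longrightarrow> subdivision_sum f \<gamma> n t Us = r)"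

text \<open>The singular 1-simplex of a path (parameter t = x 1 on the standard 1-simplex) and the
  homology class in H_1(X) of a loop.\<close>
definition path_simplex :: "(real \<Rightarrow> 'a) \<Rightarrow> (nat \<Rightarrow> real) \<Rightarrow> 'a" where
  "path_simplex \<gamma> = restrict (\<lambda>x. \<gamma> (x 1)) (standard_simplex 1)"

definition loop_class :: "'a topology \<Rightarrow> (real \<Rightarrow> 'a) \<Rightarrow> 'a chain set" where
  "loop_class X \<gamma> = homologous_rel_set 1 X {} (frag_of (path_simplex \<gamma>))"

text \<open>The additive group of the reals, so that H^1(X;R) = Hom(H_1(X), R).\<close>
definition real_add_group :: "real monoid" where
  "real_add_group = \<lparr>carrier = UNIV, monoid.mult = (+), one = 0\<rparr>"

end

theory Submission
  imports Defs "HOL-Analysis.Urysohn"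
begin

lemma continuous_map_locally_eq:
  assumes "\<And>x. x \<in> topspace X \<Longrightarrow>
             \<exists>N g. openin X N \<and> x \<in> N \<and> continuous_map X Y g \<and> (\<forall>y\<in>N. f y = g y)"
  shows "continuous_map X Y f"
proof -
  obtain N g where Ng: "\<And>x. x \<in> topspace X \<Longrightarrow>
      openin X (N x) \<and> x \<in> N x \<and> continuous_map X Y (g x) \<and> (\<forall>y\<in>N x. f y = g x y)"
    using assms by metis
  show ?thesis
  proof (rule pasting_lemma[where I = "topspace X" and T = N and f = "\<lambda>_. f"])
    show "continuous_map (subtopology X (N x)) Y f" if "x \<in> topspace X" for x
      using Ng[OF that] continuous_map_from_subtopology
      by (metis (no_types, lifting) continuous_map_eq topspace_subtopology IntD2)
  qed (use Ng in auto)
qed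

lemma paracompact_spaceE:
  assumes "paracompact_space X" "\<And>U. U \<in> \<U> \<Longrightarrow> openin X U" "\<Union>\<U> = topspace X"
  obtains \<V> where "\<And>V. V \<in> \<V> \<Longrightarrow> openin X V" "\<Union>\<V> = topspace X"
    "\<And>V. V \<in> \<V> \<Longrightarrow> \<exists>U\<in>\<U>. V \<subseteq> U" "locally_finite_in X \<V>"
  using assms unfolding paracompact_space_def by metis

lemma paracompact_space_separation:
  assumes X: "paracompact_space X" and A: "closedin X A" and B: "B \<subseteq> topspace X"
    and sep: "\<And>a. a \<in> A \<Longrightarrow> \<exists>U V. openin X U \<and> openin X V \<and> a \<in> U \<and> B \<subseteq> V \<and> disjnt U V"
  shows "\<exists>U V. openin X U \<and> openin X V \<and> A \<subseteq> U \<and> B \<subseteq> V \<and> disjnt U V"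
proof -
  define \<U> where "\<U> = insert (topspace X - A) {U. openin X U \<and> (X closure_of U) \<inter> B = {}}"
  have "\<exists>U\<in>\<U>. a \<in> U" if "a \<in> topspace X" for a
  proof (cases "a \<in> A")
    case True
    then obtain U V where "openin X U" "openin X V" "a \<in> U" "B \<subseteq> V" "disjnt U V"
      using sep by blast
    then have "(X closure_of U) \<inter> B = {}"
      using openin_Int_closure_of_eq_empty[of X V U] by (auto simp: disjnt_def)
    with \<open>openin X U\<close> \<open>a \<in> U\<close> show ?thesis by (auto simp: \<U>_def)
  qed (use that in \<open>auto simp: \<U>_def\<close>)
  then have cover: "\<Union>\<U> = topspace X"
    using A by (auto simp: \<U>_def dest: openin_subset)
  have opens: "\<And>U. U \<in> \<U> \<Longrightarrow> openin X U"
    using A by (auto simp: \<U>_def)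
  obtain \<V> where \<V>: "\<And>V. V \<in> \<V> \<Longrightarrow> openin X V" "\<Union>\<V> = topspace X"
    "\<And>V. V \<in> \<V> \<Longrightarrow> \<exists>U\<in>\<U>. V \<subseteq> U" "locally_finite_in X \<V>"
    using paracompact_spaceE[OF X opens cover] by blast
  define \<W> where "\<W> = {W\<in>\<V>. W \<inter> A \<noteq> {}}"
  have "locally_finite_in X \<W>"
    using \<V>(4) locally_finite_in_subset by (fastforce simp: \<W>_def)
  then have "X closure_of \<Union>\<W> = \<Union>((\<lambda>W. X closure_of W) ` \<W>)"
    by (rule closure_of_locally_finite_Union)
  moreover have "(X closure_of W) \<inter> B = {}" if "W \<in> \<W>" for W
  proof -
    have "W \<in> \<V>" "W \<inter> A \<noteq> {}"
      using that by (auto simp: \<W>_def)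
    then obtain U where "U \<in> \<U>" "W \<subseteq> U"
      using \<V>(3) by blast
    then have "(X closure_of U) \<inter> B = {}"
      using \<open>W \<inter> A \<noteq> {}\<close> by (auto simp: \<U>_def)
    then show ?thesis
      using closure_of_mono[OF \<open>W \<subseteq> U\<close>] by blast
  qed
  ultimately have "B \<subseteq> topspace X - X closure_of \<Union>\<W>"
    using B by auto
  moreover have "A \<subseteq> \<Union>\<W>"
    using \<V>(2) closedin_subset[OF A] unfolding \<W>_def by blast
  moreover have "disjnt (\<Union>\<W>) (topspace X - X closure_of \<Union>\<W>)"
    using closure_of_subset[of "\<Union>\<W>" X] \<V>(2) by (auto simp: \<W>_def disjnt_def)
  moreover have "openin X (\<Union>\<W>)"
    using \<V>(1) by (auto simp: \<W>_def)
  ultimately show ?thesis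
    by (meson closedin_closure_of openin_diff openin_topspace)
qed

lemma paracompact_Hausdorff_imp_regular_space:
  assumes X: "paracompact_space X" and H: "Hausdorff_space X"
  shows "regular_space X"
  unfolding regular_space_def
proof (intro allI impI)
  fix C a assume Ca: "closedin X C \<and> a \<in> topspace X - C"
  have "\<exists>U V. openin X U \<and> openin X V \<and> c \<in> U \<and> {a} \<subseteq> V \<and> disjnt U V" if "c \<in> C" for c
  proof -
    have "c \<in> topspace X" "c \<noteq> a"
      using that Ca closedin_subset by auto
    then show ?thesis
      using H Ca unfolding Hausdorff_space_def by (metis DiffD1 empty_subsetI insert_subset)
  qed
  then obtain U V where "openin X U" "openin X V" "C \<subseteq> U" "{a} \<subseteq> V" "disjnt U V"
    using paracompact_space_separation[OF X, of C "{a}"] Ca by blast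
  then show "\<exists>U V. openin X U \<and> openin X V \<and> a \<in> U \<and> C \<subseteq> V \<and> disjnt U V"
    using disjnt_sym by blast
qed

lemma paracompact_regular_imp_normal_space:
  assumes X: "paracompact_space X" and R: "regular_space X"
  shows "normal_space X"
  unfolding normal_space_def
proof (intro allI impI)
  fix S T assume ST: "closedin X S \<and> closedin X T \<and> disjnt S T"
  have "\<exists>U V. openin X U \<and> openin X V \<and> s \<in> U \<and> T \<subseteq> V \<and> disjnt U V" if "s \<in> S" for s
  proof -
    have "s \<in> topspace X - T"
      using that ST closedin_subset by (auto simp: disjnt_def)
    then show ?thesis
      using R ST unfolding regular_space_def by simp
  qed
  moreover have "T \<subseteq> topspace X"
    using ST closedin_subset by auto
  ultimately show "\<exists>U V. openin X U \<and> openin X V \<and> S \<subseteq> U \<and> T \<subseteq> V \<and> disjnt U V"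
    using paracompact_space_separation[OF X, of S T] ST by blast
qed

lemma continuous_map_sum_locally_finite:
  fixes f :: "'i \<Rightarrow> 'a \<Rightarrow> 'b::real_normed_vector"
  assumes cont: "\<And>i. i \<in> I \<Longrightarrow> continuous_map X euclidean (f i)"
    and zero: "\<And>i x. i \<in> I \<Longrightarrow> x \<in> topspace X \<Longrightarrow> x \<notin> S i \<Longrightarrow> f i x = 0"
    and fin: "\<And>x. x \<in> topspace X \<Longrightarrow> \<exists>N. openin X N \<and> x \<in> N \<and> finite {i\<in>I. S i \<inter> N \<noteq> {}}"
  shows "continuous_map X euclidean (\<lambda>x. \<Sum>i | i \<in> I \<and> x \<in> S i. f i x)"
proof (rule continuous_map_locally_eq)
  fix x assume "x \<in> topspace X"
  then obtain N where N: "openin X N" "x \<in> N" "finite {i\<in>I. S i \<inter> N \<noteq> {}}"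
    using fin by blast
  define F where "F = {i\<in>I. S i \<inter> N \<noteq> {}}"
  have "(\<Sum>i | i \<in> I \<and> y \<in> S i. f i y) = (\<Sum>i\<in>F. f i y)" if "y \<in> N" for y
    using N(3) that zero[of _ y] openin_subset[OF N(1)]
    by (intro sum.mono_neutral_left) (auto simp: F_def)
  moreover have "continuous_map X euclidean (\<lambda>y. \<Sum>i\<in>F. f i y)"
    using N(3) cont by (intro continuous_map_sum) (auto simp: F_def)
  ultimately show "\<exists>N g. openin X N \<and> x \<in> N \<and> continuous_map X euclidean g \<and>
                     (\<forall>y\<in>N. (\<Sum>i | i \<in> I \<and> y \<in> S i. f i y) = g y)"
    using N(1,2) by blast
qed

lemma paracompact_regular_shrinking:
  assumes X: "paracompact_space X" and R: "regular_space X"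
    and op: "\<And>V. V \<in> \<V> \<Longrightarrow> openin X V" and cov: "\<Union>\<V> = topspace X"
  obtains C where "\<And>V. V \<in> \<V> \<Longrightarrow> closedin X (C V)" "\<And>V. V \<in> \<V> \<Longrightarrow> C V \<subseteq> V"
    "\<And>x. x \<in> topspace X \<Longrightarrow> \<exists>V\<in>\<V>. x \<in> C V"
proof -
  define \<U> where "\<U> = {W. openin X W \<and> (\<exists>V\<in>\<V>. X closure_of W \<subseteq> V)}"
  have "x \<in> \<Union>\<U>" if x: "x \<in> topspace X" for x
  proof -
    obtain V where V: "V \<in> \<V>" "x \<in> V"
      using cov x by blast
    have "closedin X (topspace X - V)"
      using op[OF V(1)] by blast
    then obtain W where W: "openin X W" "x \<in> W" "disjnt (topspace X - V) (X closure_of W)"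
      using R[unfolded regular_space, rule_format, of "topspace X - V" x] V(2) x by blast
    then have "X closure_of W \<subseteq> V"
      using closure_of_subset_topspace[of X W] by (auto simp: disjnt_def)
    with W V(1) show ?thesis
      unfolding \<U>_def by blast
  qed
  moreover have "\<Union>\<U> \<subseteq> topspace X"
    unfolding \<U>_def by (auto dest: openin_subset)
  ultimately have cover: "\<Union>\<U> = topspace X"
    by blast
  have opens: "\<And>U. U \<in> \<U> \<Longrightarrow> openin X U"
    unfolding \<U>_def by blast
  obtain \<W> where \<W>: "\<And>W. W \<in> \<W> \<Longrightarrow> openin X W" "\<Union>\<W> = topspace X"
    "\<And>W. W \<in> \<W> \<Longrightarrow> \<exists>U\<in>\<U>. W \<subseteq> U" "locally_finite_in X \<W>"
    using paracompact_spaceE[OF X opens cover] by blast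
  have "\<exists>V\<in>\<V>. X closure_of W \<subseteq> V" if W: "W \<in> \<W>" for W
  proof -
    obtain U where "U \<in> \<U>" "W \<subseteq> U"
      using \<W>(3)[OF W] by blast
    then show ?thesis
      using closure_of_mono[of W U X] unfolding \<U>_def by blast
  qed
  then obtain a where a: "\<And>W. W \<in> \<W> \<Longrightarrow> a W \<in> \<V> \<and> X closure_of W \<subseteq> a W"
    using bchoice[of \<W> "\<lambda>W V. V \<in> \<V> \<and> X closure_of W \<subseteq> V"] by blast
  show ?thesis
  proof
    fix V
    show "closedin X (X closure_of \<Union>{W\<in>\<W>. a W = V})"
      by simp
    have "locally_finite_in X {W\<in>\<W>. a W = V}"
      by (rule locally_finite_in_subset[OF \<W>(4)]) auto
    then have "X closure_of \<Union>{W\<in>\<W>. a W = V} = \<Union>((\<lambda>W. X closure_of W) ` {W\<in>\<W>. a W = V})"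
      by (rule closure_of_locally_finite_Union)
    then show "X closure_of \<Union>{W\<in>\<W>. a W = V} \<subseteq> V"
      using a by auto
  next
    fix x assume "x \<in> topspace X"
    then obtain W where W: "W \<in> \<W>" "x \<in> W"
      using \<W>(2) by blast
    have "\<Union>{W'\<in>\<W>. a W' = a W} \<subseteq> topspace X"
      using \<W>(2) by blast
    moreover have "x \<in> \<Union>{W'\<in>\<W>. a W' = a W}"
      using W by blast
    ultimately have "x \<in> X closure_of \<Union>{W'\<in>\<W>. a W' = a W}"
      using closure_of_subset by blast
    then show "\<exists>V\<in>\<V>. x \<in> X closure_of \<Union>{W\<in>\<W>. a W = V}"
      using a W(1) by blast
  qed
qed

lemma normal_space_bump_function:
  assumes N: "normal_space X" and C: "closedin X C" and V: "openin X V" "C \<subseteq> V"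
  shows "\<exists>f. continuous_map X euclideanreal f \<and> (\<forall>x\<in>topspace X. 0 \<le> f x) \<and> (\<forall>x\<in>C. f x = 1) \<and>
           (\<exists>K. closedin X K \<and> K \<subseteq> V \<and> (\<forall>x\<in>topspace X - K. f x = 0))"
proof -
  obtain D where D: "openin X D" "C \<subseteq> D" "X closure_of D \<subseteq> V"
    using N[unfolded normal_space_alt, rule_format, of C V] C V by blast
  have "disjnt (topspace X - D) C"
    using D(2) by (auto simp: disjnt_def)
  with D(1) obtain f where f: "continuous_map X (top_of_set {0..1::real}) f"
      "f ` (topspace X - D) \<subseteq> {0}" "f ` C \<subseteq> {1}"
    using Urysohn_lemma[OF N closedin_diff[OF closedin_topspace] C, of D 0 1] by auto
  have "D \<subseteq> X closure_of D"
    using D(1) by (simp add: closure_of_subset openin_subset)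
  then have "\<forall>x\<in>topspace X - X closure_of D. f x = 0"
    using f(2) by auto
  moreover have "\<forall>x\<in>topspace X. 0 \<le> f x"
    using continuous_map_image_subset_topspace[OF f(1)] by auto
  moreover have "continuous_map X euclideanreal f"
    using f(1) by (simp add: continuous_map_in_subtopology)
  ultimately show ?thesis
    using f(3) D(3) closedin_closure_of[of X D] by (intro exI[of _ f] conjI exI[of _ "X closure_of D"]) auto
qed

lemma paracompact_partition_of_unity:
  assumes X: "paracompact_space X" "Hausdorff_space X"
    and op: "\<And>V. V \<in> \<V> \<Longrightarrow> openin X V" and cov: "\<Union>\<V> = topspace X"
    and lf: "locally_finite_in X \<V>"
  obtains \<phi> where "\<forall>V\<in>\<V>. continuous_map X euclideanreal (\<phi> V)"
    "\<forall>V\<in>\<V>. \<exists>K. closedin X K \<and> K \<subseteq> V \<and> (\<forall>x\<in>topspace X - K. \<phi> V x = 0)"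
    "\<forall>x\<in>topspace X. (\<Sum>V | V \<in> \<V> \<and> x \<in> V. \<phi> V x) = 1"
proof -
  have R: "regular_space X"
    by (rule paracompact_Hausdorff_imp_regular_space[OF X])
  have N: "normal_space X"
    by (rule paracompact_regular_imp_normal_space[OF X(1) R])
  obtain C where C: "\<And>V. V \<in> \<V> \<Longrightarrow> closedin X (C V)" "\<And>V. V \<in> \<V> \<Longrightarrow> C V \<subseteq> V"
    "\<And>x. x \<in> topspace X \<Longrightarrow> \<exists>V\<in>\<V>. x \<in> C V"
    using paracompact_regular_shrinking[OF X(1) R op cov] by blast
  have "\<forall>V\<in>\<V>. \<exists>f. continuous_map X euclideanreal f \<and> (\<forall>x\<in>topspace X. 0 \<le> f x) \<and> (\<forall>x\<in>C V. f x = 1) \<and>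
          (\<exists>K. closedin X K \<and> K \<subseteq> V \<and> (\<forall>x\<in>topspace X - K. f x = 0))"
    using normal_space_bump_function[OF N] C(1,2) op by simp
  then obtain \<psi> where \<psi>: "\<forall>V\<in>\<V>. continuous_map X euclideanreal (\<psi> V) \<and> (\<forall>x\<in>topspace X. 0 \<le> \<psi> V x) \<and>
      (\<forall>x\<in>C V. \<psi> V x = 1) \<and> (\<exists>K. closedin X K \<and> K \<subseteq> V \<and> (\<forall>x\<in>topspace X - K. \<psi> V x = 0))"
    by (metis (no_types, lifting) bchoice)
  have \<psi>_cont: "\<And>V. V \<in> \<V> \<Longrightarrow> continuous_map X euclideanreal (\<psi> V)"
    and \<psi>_nonneg: "\<And>V x. V \<in> \<V> \<Longrightarrow> x \<in> topspace X \<Longrightarrow> 0 \<le> \<psi> V x"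
    and \<psi>_one: "\<And>V x. V \<in> \<V> \<Longrightarrow> x \<in> C V \<Longrightarrow> \<psi> V x = 1"
    and \<psi>_supp: "\<And>V. V \<in> \<V> \<Longrightarrow> \<exists>K. closedin X K \<and> K \<subseteq> V \<and> (\<forall>x\<in>topspace X - K. \<psi> V x = 0)"
    using \<psi> by simp_all
  have \<psi>_zero: "\<psi> V x = 0" if "V \<in> \<V>" "x \<in> topspace X" "x \<notin> V" for V x
    using \<psi>_supp[OF that(1)] that(2,3) by blast
  have fin: "finite {V \<in> \<V>. x \<in> V}" if x: "x \<in> topspace X" for x
  proof -
    obtain N where "openin X N" "x \<in> N" "finite {V \<in> \<V>. V \<inter> N \<noteq> {}}"
      using lf x unfolding locally_finite_in_def by blast
    then show ?thesis
      by (rule_tac finite_subset[of _ "{V \<in> \<V>. V \<inter> N \<noteq> {}}"]) auto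
  qed
  define \<sigma> where "\<sigma> x = (\<Sum>V | V \<in> \<V> \<and> x \<in> V. \<psi> V x)" for x
  have \<sigma>_cont: "continuous_map X euclideanreal \<sigma>"
    unfolding \<sigma>_def
  proof (rule continuous_map_sum_locally_finite[where S = id, simplified])
    show "\<And>x. x \<in> topspace X \<Longrightarrow> \<exists>N. openin X N \<and> x \<in> N \<and> finite {V \<in> \<V>. V \<inter> N \<noteq> {}}"
      using lf unfolding locally_finite_in_def by blast
  qed (use \<psi>_cont \<psi>_zero in auto)
  have \<sigma>_ge: "1 \<le> \<sigma> x" if x: "x \<in> topspace X" for x
  proof -
    obtain V where V: "V \<in> \<V>" "x \<in> C V"
      using C(3) x by blast
    then have "\<psi> V x \<le> \<sigma> x"
      unfolding \<sigma>_def using C(2) fin[OF x] \<psi>_nonneg x by (intro member_le_sum) auto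
    then show ?thesis
      using \<psi>_one V by simp
  qed
  show ?thesis
  proof
    show "\<forall>V\<in>\<V>. continuous_map X euclideanreal (\<lambda>x. \<psi> V x / \<sigma> x)"
      using \<psi>_cont \<sigma>_cont \<sigma>_ge by (force intro!: continuous_map_real_divide)
    show "\<forall>V\<in>\<V>. \<exists>K. closedin X K \<and> K \<subseteq> V \<and> (\<forall>x\<in>topspace X - K. \<psi> V x / \<sigma> x = 0)"
      using \<psi>_supp by fastforce
    show "\<forall>x\<in>topspace X. (\<Sum>V | V \<in> \<V> \<and> x \<in> V. \<psi> V x / \<sigma> x) = 1"
    proof
      fix x assume "x \<in> topspace X"
      then have "\<sigma> x \<noteq> 0"
        using \<sigma>_ge by force
      then show "(\<Sum>V | V \<in> \<V> \<and> x \<in> V. \<psi> V x / \<sigma> x) = 1"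
        by (simp add: \<sigma>_def flip: sum_divide_distrib)
    qed
  qed
qed

lemma continuous_map_cutoff_locally_constant:
  assumes \<phi>: "continuous_map X euclideanreal \<phi>"
    and supp: "closedin X C" "C \<subseteq> L" "\<forall>x\<in>topspace X - C. \<phi> x = 0"
    and loc: "\<And>y. y \<in> K \<inter> L \<Longrightarrow> \<exists>N. openin X N \<and> y \<in> N \<and> N \<subseteq> K \<inter> L \<and> (\<forall>z\<in>N. h z = h y)"
  shows "continuous_map (subtopology X K) euclideanreal (\<lambda>y. if y \<in> L then \<phi> y * h y else 0)"
proof (rule continuous_map_locally_eq)
  fix y assume "y \<in> topspace (subtopology X K)"
  then have y: "y \<in> topspace X" "y \<in> K"
    by auto
  show "\<exists>N g. openin (subtopology X K) N \<and> y \<in> N \<and> continuous_map (subtopology X K) euclideanreal g \<and>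
          (\<forall>z\<in>N. (if z \<in> L then \<phi> z * h z else 0) = g z)"
  proof (cases "y \<in> L")
    case True
    then obtain N where N: "openin X N" "y \<in> N" "N \<subseteq> K \<inter> L" "\<forall>z\<in>N. h z = h y"
      using loc y(2) by blast
    have "openin (subtopology X K) (K \<inter> N)"
      using N(1) by (rule openin_subtopology_Int2)
    moreover have "continuous_map (subtopology X K) euclideanreal (\<lambda>z. \<phi> z * h y)"
      using \<phi> by (intro continuous_intros continuous_map_from_subtopology)
    moreover have "\<forall>z\<in>K \<inter> N. (if z \<in> L then \<phi> z * h z else 0) = \<phi> z * h y"
      using N(3,4) by auto
    ultimately show ?thesis
      using N(2) y(2) by (intro exI[of _ "K \<inter> N"] exI[of _ "\<lambda>z. \<phi> z * h y"]) auto
  next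
    case False
    have "openin (subtopology X K) (K \<inter> (topspace X - C))"
      using supp(1) by (intro openin_subtopology_Int2) blast
    moreover have "y \<in> K \<inter> (topspace X - C)"
      using False supp(2) y by auto
    moreover have "\<forall>z\<in>K \<inter> (topspace X - C). (if z \<in> L then \<phi> z * h z else 0) = 0"
      using supp(3) by auto
    ultimately show ?thesis
      by (intro exI[of _ "K \<inter> (topspace X - C)"] exI[of _ "\<lambda>_. 0"]) auto
  qed
qed

lemma locally_constant_differences_correction:
  assumes X: "paracompact_space X" "Hausdorff_space X"
    and op: "\<And>V. V \<in> \<V> \<Longrightarrow> openin X V" and cov: "\<Union>\<V> = topspace X"
    and lf: "locally_finite_in X \<V>"
    and loc: "\<And>K L y. K \<in> \<V> \<Longrightarrow> L \<in> \<V> \<Longrightarrow> y \<in> K \<inter> L \<Longrightarrow>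
                \<exists>N. openin X N \<and> y \<in> N \<and> N \<subseteq> K \<inter> L \<and> (\<forall>z\<in>N. G K z - G L z = G K y - G L y)"
  obtains F where "\<And>K. K \<in> \<V> \<Longrightarrow> continuous_map (subtopology X K) euclideanreal (\<lambda>y. G K y - F y)"
proof -
  obtain \<phi> where \<phi>_cont: "\<forall>V\<in>\<V>. continuous_map X euclideanreal (\<phi> V)"
    and \<phi>_supp: "\<forall>V\<in>\<V>. \<exists>C. closedin X C \<and> C \<subseteq> V \<and> (\<forall>x\<in>topspace X - C. \<phi> V x = 0)"
    and \<phi>_sum: "\<forall>x\<in>topspace X. (\<Sum>V | V \<in> \<V> \<and> x \<in> V. \<phi> V x) = 1"
    by (rule paracompact_partition_of_unity[OF X op cov lf])
  define F where "F y = (\<Sum>L | L \<in> \<V> \<and> y \<in> L. \<phi> L y * G L y)" for y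
  show ?thesis
  proof
    fix K assume K: "K \<in> \<V>"
    define f where "f L y = (if y \<in> L then \<phi> L y * (G K y - G L y) else 0)" for L y
    have eq: "G K y - F y = (\<Sum>L | L \<in> \<V> \<and> y \<in> L \<inter> K. f L y)" if y: "y \<in> topspace X" "y \<in> K" for y
    proof -
      have "G K y - F y = (\<Sum>L | L \<in> \<V> \<and> y \<in> L. \<phi> L y) * G K y - F y"
        using \<phi>_sum y(1) by simp
      also have "\<dots> = (\<Sum>L | L \<in> \<V> \<and> y \<in> L. \<phi> L y * G K y - \<phi> L y * G L y)"
        by (simp only: F_def sum_distrib_right sum_subtractf)
      also have "\<dots> = (\<Sum>L | L \<in> \<V> \<and> y \<in> L. \<phi> L y * (G K y - G L y))"
        by (simp only: right_diff_distrib)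
      also have "\<dots> = (\<Sum>L | L \<in> \<V> \<and> y \<in> L \<inter> K. f L y)"
        using y(2) by (intro sum.cong) (auto simp: f_def)
      finally show ?thesis .
    qed
    have cont: "continuous_map (subtopology X K) euclideanreal (\<lambda>y. \<Sum>L | L \<in> \<V> \<and> y \<in> L \<inter> K. f L y)"
    proof (rule continuous_map_sum_locally_finite)
      show "continuous_map (subtopology X K) euclidean (f L)" if L: "L \<in> \<V>" for L
      proof -
        obtain C where C: "closedin X C" "C \<subseteq> L" "\<forall>x\<in>topspace X - C. \<phi> L x = 0"
          using \<phi>_supp L by blast
        show ?thesis
          unfolding f_def by (rule continuous_map_cutoff_locally_constant[OF bspec[OF \<phi>_cont L] C loc[OF K L]])
      qed
      show "f L y = 0" if "y \<in> topspace (subtopology X K)" "y \<notin> L \<inter> K" for L y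
        using that by (simp add: f_def)
      fix y assume "y \<in> topspace (subtopology X K)"
      then obtain N where N: "openin X N" "y \<in> N" "finite {L \<in> \<V>. L \<inter> N \<noteq> {}}"
        using lf unfolding locally_finite_in_def by auto
      have "finite {L \<in> \<V>. L \<inter> K \<inter> (K \<inter> N) \<noteq> {}}"
        by (rule finite_subset[OF _ N(3)]) blast
      moreover have "openin (subtopology X K) (K \<inter> N)"
        using N(1) by (rule openin_subtopology_Int2)
      ultimately show "\<exists>N'. openin (subtopology X K) N' \<and> y \<in> N' \<and> finite {L \<in> \<V>. L \<inter> K \<inter> N' \<noteq> {}}"
        using N(2) \<open>y \<in> topspace (subtopology X K)\<close> by auto
    qed
    show "continuous_map (subtopology X K) euclideanreal (\<lambda>y. G K y - F y)"
      by (rule continuous_map_eq[OF cont]) (simp add: eq)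
  qed
qed

definition point_simplex :: "'a \<Rightarrow> (nat \<Rightarrow> real) \<Rightarrow> 'a" where
  "point_simplex y = restrict (\<lambda>_. y) (standard_simplex 0)"

definition segment_simplex :: "(real \<Rightarrow> 'a) \<Rightarrow> real \<Rightarrow> real \<Rightarrow> (nat \<Rightarrow> real) \<Rightarrow> 'a" where
  "segment_simplex g a b = restrict (\<lambda>x. g (a * x 0 + b * x 1)) (standard_simplex 1)"

definition triangle_simplex :: "(real \<Rightarrow> 'a) \<Rightarrow> real \<Rightarrow> real \<Rightarrow> real \<Rightarrow> (nat \<Rightarrow> real) \<Rightarrow> 'a" where
  "triangle_simplex g a b c = restrict (\<lambda>x. g (a * x 0 + b * x 1 + c * x 2)) (standard_simplex 2)"

lemma path_simplex_eq_segment_simplex: "path_simplex g = segment_simplex g 0 1"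
  by (simp add: path_simplex_def segment_simplex_def)

lemma singular_simplex_point_simplex:
  "y \<in> topspace X \<Longrightarrow> singular_simplex 0 X (point_simplex y)"
  unfolding singular_simplex_def point_simplex_def
  by (auto intro: continuous_map_eq[of _ _ "\<lambda>_. y"])

lemma continuous_map_standard_simplex_coordinate:
  "continuous_map (subtopology (powertop_real UNIV) (standard_simplex p)) euclideanreal (\<lambda>x. x k)"
  by (intro continuous_map_from_subtopology
      continuous_map_product_projection[of _ UNIV "\<lambda>_. euclideanreal", simplified])

lemma singular_simplex_path_compose:
  assumes g: "pathin X g"
    and L: "continuous_map (subtopology (powertop_real UNIV) (standard_simplex p)) euclideanreal L"
    and range: "\<And>x. x \<in> standard_simplex p \<Longrightarrow> L x \<in> {a..b}"
    and ab: "0 \<le> a" "b \<le> 1" and S: "g ` {a..b} \<subseteq> S"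
  shows "singular_simplex p (subtopology X S) (restrict (\<lambda>x. g (L x)) (standard_simplex p))"
proof -
  have "continuous_map (subtopology (powertop_real UNIV) (standard_simplex p)) (top_of_set {0..1}) L"
    using L range ab by (force simp: continuous_map_in_subtopology)
  then have "continuous_map (subtopology (powertop_real UNIV) (standard_simplex p)) X (g \<circ> L)"
    using g unfolding pathin_def by (rule continuous_map_compose)
  then have "continuous_map (subtopology (powertop_real UNIV) (standard_simplex p)) (subtopology X S) (g \<circ> L)"
    using range S by (force simp: continuous_map_in_subtopology)
  then show ?thesis
    unfolding singular_simplex_def by (auto intro: continuous_map_eq)
qed

lemma standard_simplex_1_bounds:
  assumes "x \<in> standard_simplex 1" "a \<le> b"
  shows "a * x 0 + b * x 1 \<in> {a..b}"
proof -
  have x: "0 \<le> x 0" "0 \<le> x 1" "x 0 + x 1 = 1"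
    using assms(1) by (auto simp: standard_simplex_def atMost_Suc)
  have "a * x 1 \<le> b * x 1" "a * x 0 \<le> b * x 0"
    using assms(2) x by (simp_all add: mult_right_mono)
  moreover have "a = a * x 0 + a * x 1" "b = b * x 0 + b * x 1"
    using x(3) by (simp_all flip: distrib_left)
  ultimately show ?thesis
    by simp
qed

lemma standard_simplex_2_bounds:
  assumes "x \<in> standard_simplex 2" "a \<le> b" "b \<le> c"
  shows "a * x 0 + b * x 1 + c * x 2 \<in> {a..c}"
proof -
  have x: "0 \<le> x 0" "0 \<le> x 1" "0 \<le> x 2" "x 0 + x 1 + x 2 = 1"
    using assms(1) by (auto simp: standard_simplex_def atMost_Suc numeral_2_eq_2)
  have "a * x 1 \<le> b * x 1" "a * x 2 \<le> c * x 2" "b * x 1 \<le> c * x 1" "a * x 0 \<le> c * x 0"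
    using assms(2,3) x by (simp_all add: mult_right_mono)
  moreover have "a = a * x 0 + a * x 1 + a * x 2" "c = c * x 0 + c * x 1 + c * x 2"
    using x(4) by (simp_all flip: distrib_left)
  ultimately show ?thesis
    by simp
qed

lemma singular_simplex_segment_simplex:
  assumes "pathin X g" "0 \<le> a" "a \<le> b" "b \<le> 1" "g ` {a..b} \<subseteq> S"
  shows "singular_simplex 1 (subtopology X S) (segment_simplex g a b)"
  unfolding segment_simplex_def
  using assms standard_simplex_1_bounds[OF _ \<open>a \<le> b\<close>]
  by (intro singular_simplex_path_compose[where a = a and b = b])
     (auto intro!: continuous_intros continuous_map_standard_simplex_coordinate)

lemma singular_simplex_triangle_simplex:
  assumes "pathin X g" "0 \<le> a" "a \<le> b" "b \<le> c" "c \<le> 1" "g ` {a..c} \<subseteq> S"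
  shows "singular_simplex 2 (subtopology X S) (triangle_simplex g a b c)"
  unfolding triangle_simplex_def
  using assms standard_simplex_2_bounds[OF _ \<open>a \<le> b\<close> \<open>b \<le> c\<close>]
  by (intro singular_simplex_path_compose[where a = a and b = c])
     (auto intro!: continuous_intros continuous_map_standard_simplex_coordinate)

lemma chain_boundary_1_frag_of:
  "chain_boundary 1 (frag_of f) = frag_of (singular_face 1 0 f) - frag_of (singular_face 1 1 f)"
  by (simp add: chain_boundary_of atMost_Suc)

lemma chain_boundary_2_frag_of:
  "chain_boundary 2 (frag_of f) =
     frag_of (singular_face 2 0 f) - frag_of (singular_face 2 1 f) + frag_of (singular_face 2 2 f)"
  by (simp add: chain_boundary_of atMost_Suc numeral_2_eq_2)

lemma singular_face_segment_simplex:
  assumes "k \<le> 1"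
  shows "singular_face 1 k (segment_simplex g a b) = point_simplex (g (if k = 0 then b else a))"
proof
  fix x
  show "singular_face 1 k (segment_simplex g a b) x = point_simplex (g (if k = 0 then b else a)) x"
  proof (cases "x \<in> standard_simplex 0")
    case True
    then have "simplical_face k x \<in> standard_simplex 1"
      using simplical_face_in_standard_simplex[of 1 k x] assms by simp
    then show ?thesis
      using True assms
      by (auto simp: singular_face_def segment_simplex_def point_simplex_def simplical_face_def standard_simplex_0)
  qed (simp add: singular_face_def point_simplex_def)
qed

lemma chain_boundary_segment_simplex:
  "chain_boundary 1 (frag_of (segment_simplex g a b)) = frag_of (point_simplex (g b)) - frag_of (point_simplex (g a))"
  unfolding chain_boundary_1_frag_of
  using singular_face_segment_simplex[of 0 g a b] singular_face_segment_simplex[of 1 g a b] by simp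

lemma singular_face_triangle_simplex:
  assumes "k \<le> 2"
  shows "singular_face 2 k (triangle_simplex g a b c) =
     (if k = 0 then segment_simplex g b c else if k = 1 then segment_simplex g a c else segment_simplex g a b)"
proof
  fix x
  show "singular_face 2 k (triangle_simplex g a b c) x =
    (if k = 0 then segment_simplex g b c else if k = 1 then segment_simplex g a c else segment_simplex g a b) x"
  proof (cases "x \<in> standard_simplex 1")
    case True
    then have "simplical_face k x \<in> standard_simplex 2"
      using simplical_face_in_standard_simplex[of 2 k x] assms by simp
    then show ?thesis
      using True assms by (auto simp: singular_face_def segment_simplex_def triangle_simplex_def simplical_face_def)
  qed (simp add: singular_face_def segment_simplex_def)
qed

lemma chain_boundary_triangle_simplex:
  "chain_boundary 2 (frag_of (triangle_simplex g a b c)) =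
     frag_of (segment_simplex g b c) - frag_of (segment_simplex g a c) + frag_of (segment_simplex g a b)"
  by (simp add: chain_boundary_2_frag_of singular_face_triangle_simplex)

lemma carrier_homology_group_1:
  "singular_relcycle 1 X {} a \<Longrightarrow> homologous_rel_set 1 X {} a \<in> carrier (homology_group 1 X)"
  using carrier_relative_homology_group[of 1 X "{}"] by simp

lemma one_homology_group_1: "\<one>\<^bsub>homology_group 1 X\<^esub> = singular_relboundary_set 1 X {}"
  using one_relative_homology_group[of 1 X "{}"] by simp

lemma mult_homology_group_1:
  assumes "singular_relcycle 1 X {} a" "singular_relcycle 1 X {} b"
  shows "homologous_rel_set 1 X {} a \<otimes>\<^bsub>homology_group 1 X\<^esub> homologous_rel_set 1 X {} b
       = homologous_rel_set 1 X {} (a + b)"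
proof -
  have m: "(\<otimes>\<^bsub>homology_group 1 X\<^esub>) = (\<lambda>R S. \<Union>r\<in>R. \<Union>s\<in>S. {r + s})"
    using mult_relative_homology_group[of 1 X "{}"] by simp
  show ?thesis
  proof (simp only: m, intro equalityI subsetI)
    fix x assume "x \<in> (\<Union>r\<in>homologous_rel_set 1 X {} a. \<Union>s\<in>homologous_rel_set 1 X {} b. {r + s})"
    then obtain r s where "homologous_rel 1 X {} a r" "homologous_rel 1 X {} b s" "x = r + s"
      by auto
    then show "x \<in> homologous_rel_set 1 X {} (a + b)"
      by (simp add: homologous_rel_add)
  next
    fix x assume "x \<in> homologous_rel_set 1 X {} (a + b)"
    then have "homologous_rel 1 X {} a (x - b)"
      by (simp add: homologous_rel_def algebra_simps)
    then show "x \<in> (\<Union>r\<in>homologous_rel_set 1 X {} a. \<Union>s\<in>homologous_rel_set 1 X {} b. {r + s})"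
      by (auto intro!: bexI[of _ "x - b"] bexI[of _ b])
  qed
qed

locale homology_functional =
  fixes X :: "'a topology" and \<xi> :: "'a chain set \<Rightarrow> real"
  assumes \<xi>_hom: "\<xi> \<in> hom (homology_group 1 X) real_add_group"
begin

lemma \<xi>_mult:
  assumes "a \<in> carrier (homology_group 1 X)" "b \<in> carrier (homology_group 1 X)"
  shows "\<xi> (a \<otimes>\<^bsub>homology_group 1 X\<^esub> b) = \<xi> a + \<xi> b"
  using \<xi>_hom assms unfolding hom_def by (simp add: real_add_group_def)

lemma \<xi>_relboundary:
  assumes "singular_relboundary 1 X {} c"
  shows "\<xi> (homologous_rel_set 1 X {} c) = 0"
proof -
  interpret group "homology_group 1 X"
    by simp
  have "\<xi> \<one>\<^bsub>homology_group 1 X\<^esub> = \<xi> \<one>\<^bsub>homology_group 1 X\<^esub> + \<xi> \<one>\<^bsub>homology_group 1 X\<^esub>"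
    using \<xi>_mult[OF one_closed one_closed] by simp
  moreover have "homologous_rel_set 1 X {} c = \<one>\<^bsub>homology_group 1 X\<^esub>"
    using homologous_rel_set_eq_relboundary[of 1 X "{}" c] assms unfolding one_homology_group_1 by blast
  ultimately show ?thesis
    by simp
qed

definition base_point :: "((nat \<Rightarrow> real) \<Rightarrow> 'a) \<Rightarrow> (nat \<Rightarrow> real) \<Rightarrow> 'a" where
  "base_point s = (SOME t. homologous_rel 0 X {} (frag_of s) (frag_of t))"

definition base_chain :: "((nat \<Rightarrow> real) \<Rightarrow> 'a) \<Rightarrow> 'a chain" where
  "base_chain s = (SOME d. singular_chain 1 X d \<and> chain_boundary 1 d = frag_of s - frag_of (base_point s))"

definition period :: "'a chain \<Rightarrow> real" where
  "period c = \<xi> (homologous_rel_set 1 X {} (c - frag_extend base_chain (chain_boundary 1 c)))"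

lemma homologous_base_point: "homologous_rel 0 X {} (frag_of s) (frag_of (base_point s))"
  unfolding base_point_def by (rule someI[of _ s]) (simp add: homologous_rel_refl)

lemma base_point_eq:
  assumes "homologous_rel 0 X {} (frag_of s) (frag_of t)"
  shows "base_point s = base_point t"
proof -
  have "(\<lambda>u. homologous_rel 0 X {} (frag_of s) (frag_of u)) = (\<lambda>u. homologous_rel 0 X {} (frag_of t) (frag_of u))"
    using assms unfolding fun_eq_iff by (meson homologous_rel_sym homologous_rel_trans)
  then show ?thesis
    by (simp add: base_point_def)
qed

lemma base_chain:
  "singular_chain 1 X (base_chain s) \<and> chain_boundary 1 (base_chain s) = frag_of s - frag_of (base_point s)"
proof -
  have "singular_relboundary 0 X {} (frag_of s - frag_of (base_point s))"
    using homologous_base_point[of s] by (simp add: homologous_rel_def)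
  then have "\<exists>d. singular_chain 1 X d \<and> chain_boundary 1 d = frag_of s - frag_of (base_point s)"
    by (simp add: singular_boundary)
  then show ?thesis
    unfolding base_chain_def by (rule someI_ex)
qed

lemma chain_boundary_base_chains:
  "chain_boundary 1 (frag_extend base_chain c) = c - frag_extend (\<lambda>s. frag_of (base_point s)) c"
proof -
  have "Poly_Mapping.keys c \<subseteq> UNIV"
    by simp
  then show ?thesis
  proof (induction c rule: frag_induction)
    case (one s)
    then show ?case
      using base_chain[of s] by simp
  next
    case (diff a b)
    then show ?case
      by (simp add: chain_boundary_diff frag_extend_diff algebra_simps)
  qed auto
qed

lemma base_points_chain_boundary:
  assumes "singular_chain 1 X c"
  shows "frag_extend (\<lambda>s. frag_of (base_point s)) (chain_boundary 1 c) = 0"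
  using assms unfolding singular_chain_def
proof (induction c rule: frag_induction)
  case (one \<sigma>)
  have "singular_relboundary 0 X {} (frag_of (singular_face 1 0 \<sigma>) - frag_of (singular_face 1 1 \<sigma>))"
    unfolding singular_boundary
    by (rule exI[of _ "frag_of \<sigma>"]) (use one in \<open>simp add: singular_chain_of chain_boundary_1_frag_of[simplified]\<close>)
  then have "base_point (singular_face 1 0 \<sigma>) = base_point (singular_face 1 1 \<sigma>)"
    by (intro base_point_eq) (simp add: homologous_rel_def)
  then show ?case
    unfolding chain_boundary_1_frag_of by (simp add: frag_extend_diff)
next
  case (diff a b)
  then show ?case
    by (simp add: chain_boundary_diff frag_extend_diff)
qed auto

lemma singular_relcycle_period_chain:
  assumes "singular_chain 1 X c"
  shows "singular_relcycle 1 X {} (c - frag_extend base_chain (chain_boundary 1 c))"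
  unfolding singular_cycle
proof
  show "singular_chain 1 X (c - frag_extend base_chain (chain_boundary 1 c))"
    using assms base_chain by (intro singular_chain_diff singular_chain_extend) auto
  show "chain_boundary 1 (c - frag_extend base_chain (chain_boundary 1 c)) = 0"
    using base_points_chain_boundary[OF assms] unfolding chain_boundary_diff chain_boundary_base_chains by simp
qed

lemma period_add:
  assumes "singular_chain 1 X a" "singular_chain 1 X b"
  shows "period (a + b) = period a + period b"
proof -
  have e: "(a + b) - frag_extend base_chain (chain_boundary 1 (a + b)) =
        (a - frag_extend base_chain (chain_boundary 1 a)) + (b - frag_extend base_chain (chain_boundary 1 b))"
    by (simp add: chain_boundary_add frag_extend_add algebra_simps)
  show ?thesis
    unfolding period_def e
    using mult_homology_group_1[OF singular_relcycle_period_chain[OF assms(1)] singular_relcycle_period_chain[OF assms(2)]]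
      \<xi>_mult[OF carrier_homology_group_1[OF singular_relcycle_period_chain[OF assms(1)]]
                 carrier_homology_group_1[OF singular_relcycle_period_chain[OF assms(2)]]]
    by simp
qed

lemma period_diff:
  assumes "singular_chain 1 X a" "singular_chain 1 X b"
  shows "period (a - b) = period a - period b"
  using period_add[of "a - b" b] assms by (simp add: singular_chain_diff)

lemma period_cycle:
  "chain_boundary 1 z = 0 \<Longrightarrow> period z = \<xi> (homologous_rel_set 1 X {} z)"
  by (simp add: period_def)

lemma period_relboundary:
  assumes "singular_relboundary 1 X {} z"
  shows "period z = 0"
proof -
  obtain d where "singular_chain 2 X d" "chain_boundary 2 d = z"
    using assms by (auto simp: singular_boundary numeral_2_eq_2)
  then have "chain_boundary 1 z = 0"
    using chain_boundary_boundary by force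
  then show ?thesis
    using \<xi>_relboundary[OF assms] by (simp add: period_cycle)
qed

lemma period_segment_add:
  assumes g: "pathin X g" and abc: "0 \<le> a" "a \<le> b" "b \<le> c" "c \<le> 1"
  shows "period (frag_of (segment_simplex g a c)) =
           period (frag_of (segment_simplex g a b)) + period (frag_of (segment_simplex g b c))"
proof -
  have image: "g ` {u..v} \<subseteq> topspace X" if "0 \<le> u" "v \<le> 1" for u v
    using path_image_subset_topspace[OF g] that by auto
  have seg: "singular_chain 1 X (frag_of (segment_simplex g u v))" if "0 \<le> u" "u \<le> v" "v \<le> 1" for u v
    using singular_simplex_segment_simplex[OF g that image] that by (simp add: singular_chain_of)
  define \<tau> where "\<tau> = chain_boundary 2 (frag_of (triangle_simplex g a b c))"
  have "singular_chain 2 X (frag_of (triangle_simplex g a b c))"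
    using singular_simplex_triangle_simplex[OF g abc image[OF abc(1,4)]] by (simp add: singular_chain_of)
  then have \<tau>: "singular_relboundary 1 X {} \<tau>"
    unfolding \<tau>_def singular_boundary by (auto simp: numeral_2_eq_2)
  have "frag_of (segment_simplex g a c) = (frag_of (segment_simplex g a b) + frag_of (segment_simplex g b c)) - \<tau>"
    by (simp add: \<tau>_def chain_boundary_triangle_simplex)
  then have "period (frag_of (segment_simplex g a c)) =
               period (frag_of (segment_simplex g a b) + frag_of (segment_simplex g b c)) - period \<tau>"
    using abc seg singular_boundary_imp_chain[OF \<tau>] by (simp add: period_diff singular_chain_add)
  also have "\<dots> = period (frag_of (segment_simplex g a b)) + period (frag_of (segment_simplex g b c))"
    using abc seg period_relboundary[OF \<tau>] by (simp add: period_add)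
  finally show ?thesis .
qed

lemma period_segment_subdivision:
  assumes g: "pathin X g" and t: "0 \<le> t 0" "t n \<le> 1" "\<forall>i<n. t i \<le> t (Suc i)"
  shows "period (frag_of (segment_simplex g (t 0) (t n))) =
           (\<Sum>i<n. period (frag_of (segment_simplex g (t i) (t (Suc i)))))"
proof -
  have mono: "t i \<le> t j" if "i \<le> j" "j \<le> n" for i j
    by (rule lift_Suc_mono_le_ivl[of "{..<n}"]) (use t(3) that in auto)
  have "period (frag_of (segment_simplex g (t 0) (t m))) =
          (\<Sum>i<m. period (frag_of (segment_simplex g (t i) (t (Suc i)))))" if "m \<le> n" for m
    using that
  proof (induction m)
    case 0
    show ?case
      using period_segment_add[OF g, of "t 0" "t 0" "t 0"] t(1) mono[of 0 n] t(2) by simp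
  next
    case (Suc m)
    then have "t 0 \<le> t m" "t m \<le> t (Suc m)" "t (Suc m) \<le> 1"
      using mono[of 0 m] mono[of m "Suc m"] mono[of "Suc m" n] t(2) by auto
    then show ?case
      using Suc period_segment_add[OF g t(1), of "t m" "t (Suc m)"] by simp
  qed
  then show ?thesis
    by simp
qed

end

lemma relboundary_if_hom_induced_trivial:
  assumes VU: "V \<subseteq> U" and z: "singular_relcycle q (subtopology X V) {} z"
    and red: "homologous_rel_set q (subtopology X V) {} z \<in> carrier (reduced_homology_group (int q) (subtopology X V))"
    and triv: "\<forall>c\<in>carrier (reduced_homology_group (int q) (subtopology X V)).
                 hom_induced (int q) (subtopology X V) {} (subtopology X U) {} id c
                   = \<one>\<^bsub>homology_group (int q) (subtopology X U)\<^esub>"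
  shows "singular_relboundary q (subtopology X U) {} z"
proof -
  have "hom_induced (int q) (subtopology X V) {} (subtopology X U) {} id (homologous_rel_set q (subtopology X V) {} z)
          = homologous_rel_set q (subtopology X U) {} (chain_map q id z)"
    by (rule hom_induced_chain_map) (use z VU in \<open>auto simp: continuous_map_in_subtopology\<close>)
  moreover have "chain_map q id z = z"
    using chain_map_ident[of q "subtopology X V" z] z by (simp add: singular_cycle)
  ultimately have "homologous_rel_set q (subtopology X U) {} z = \<one>\<^bsub>homology_group (int q) (subtopology X U)\<^esub>"
    using bspec[OF triv red] by metis
  then have "homologous_rel_set q (subtopology X U) {} z = singular_relboundary_set q (subtopology X U) {}"
    by simp
  then show ?thesis
    by (simp only: homologous_rel_set_eq_relboundary)
qed

lemma reduced_homology_point_difference: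
  assumes "y \<in> topspace X" "z \<in> topspace X"
  shows "homologous_rel_set 0 X {} (frag_of (point_simplex z) - frag_of (point_simplex y))
           \<in> carrier (reduced_homology_group 0 X)"
proof -
  define c where "c = frag_of (point_simplex z) - frag_of (point_simplex y)"
  have "singular_chain 0 X c"
    unfolding c_def using assms by (intro singular_chain_diff) (simp_all add: singular_chain_of singular_simplex_point_simplex)
  then have cyc: "singular_relcycle 0 X {} c"
    by (simp add: singular_cycle chain_boundary_def)
  have "chain_map 0 (\<lambda>x. ()) c = 0"
    by (simp add: c_def chain_map_diff simplex_map_def point_simplex_def o_def)
  then have "hom_induced (int 0) X {} (discrete_topology {()}) {} (\<lambda>x. ()) (homologous_rel_set 0 X {} c)
               = \<one>\<^bsub>homology_group (int 0) (discrete_topology {()})\<^esub>"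
    using hom_induced_chain_map[of X "discrete_topology {()}" "\<lambda>x. ()" "{}" "{}" 0 c] cyc
      homologous_rel_set_eq_relboundary[of 0 "discrete_topology {()}" "{}" 0]
      one_relative_homology_group[of 0 "discrete_topology {()}" "{}"]
    by simp
  moreover have "homologous_rel_set 0 X {} c \<in> carrier (homology_group 0 X)"
    using carrier_relative_homology_group_0[of X "{}"] cyc by blast
  ultimately show ?thesis
    unfolding c_def[symmetric] carrier_reduced_homology_group kernel_def by simp
qed

lemma homologically_locally_connected_points_homologous:
  assumes H: "homologically_locally_connected X" and x: "x \<in> topspace X" and U: "nbhd_in X x U"
  shows "\<exists>V. nbhd_in X x V \<and> V \<subseteq> U \<and>
           (\<forall>y\<in>V. \<forall>z\<in>V. singular_relboundary 0 (subtopology X U) {} (frag_of (point_simplex z) - frag_of (point_simplex y)))"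
proof -
  obtain V where V: "nbhd_in X x V" "V \<subseteq> U"
    and triv: "\<forall>q::int. \<forall>c\<in>carrier (reduced_homology_group q (subtopology X V)).
                 hom_induced q (subtopology X V) {} (subtopology X U) {} id c = \<one>\<^bsub>homology_group q (subtopology X U)\<^esub>"
    using H x U unfolding homologically_locally_connected_def by blast
  have "singular_relboundary 0 (subtopology X U) {} (frag_of (point_simplex z) - frag_of (point_simplex y))"
    if "y \<in> V" "z \<in> V" for y z
  proof (rule relboundary_if_hom_induced_trivial[OF V(2)])
    have "V \<subseteq> topspace X"
      using V(1) by (simp add: nbhd_in_def)
    then have "y \<in> topspace (subtopology X V)" "z \<in> topspace (subtopology X V)"
      using that by auto
    then show "homologous_rel_set 0 (subtopology X V) {} (frag_of (point_simplex z) - frag_of (point_simplex y))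
                 \<in> carrier (reduced_homology_group (int 0) (subtopology X V))"
      by (simp add: reduced_homology_point_difference)
    then show "singular_relcycle 0 (subtopology X V) {} (frag_of (point_simplex z) - frag_of (point_simplex y))"
      using \<open>y \<in> topspace (subtopology X V)\<close> \<open>z \<in> topspace (subtopology X V)\<close>
      by (simp add: singular_cycle chain_boundary_def singular_chain_diff singular_chain_of singular_simplex_point_simplex)
  qed (use triv in blast)
  then show ?thesis
    using V by blast
qed

lemma homologically_locally_connected_cycles_bound:
  assumes H: "homologically_locally_connected X" and x: "x \<in> topspace X"
  shows "\<exists>W. nbhd_in X x W \<and> (\<forall>z. singular_relcycle 1 (subtopology X W) {} z \<longrightarrow> singular_relboundary 1 X {} z)"
proof -
  have "nbhd_in X x (topspace X)"
    using x by (auto simp: nbhd_in_def)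
  then obtain W where W: "nbhd_in X x W" "W \<subseteq> topspace X"
    and triv: "\<forall>q::int. \<forall>c\<in>carrier (reduced_homology_group q (subtopology X W)).
                 hom_induced q (subtopology X W) {} (subtopology X (topspace X)) {} id c
                   = \<one>\<^bsub>homology_group q (subtopology X (topspace X))\<^esub>"
    using H x unfolding homologically_locally_connected_def by blast
  have "singular_relboundary 1 X {} z" if z: "singular_relcycle 1 (subtopology X W) {} z" for z
  proof -
    have "homologous_rel_set 1 (subtopology X W) {} z \<in> carrier (reduced_homology_group (int 1) (subtopology X W))"
      using carrier_homology_group_1[OF z] un_reduced_homology_group[of 1 "subtopology X W"] by simp
    then show ?thesis
      using relboundary_if_hom_induced_trivial[OF W(2) z] triv by simp
  qed
  then show ?thesis
    using W(1) by blast
qed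

lemma admissible_subdivision_le:
  assumes "admissible_subdivision \<U> g n t Us" "i \<le> j" "j \<le> n"
  shows "t i \<le> t j"
  by (rule lift_Suc_mono_le_ivl[of "{..<n}"]) (use assms in \<open>auto simp: admissible_subdivision_def\<close>)

lemma admissible_subdivision_range:
  assumes "admissible_subdivision \<U> g n t Us" "i \<le> n"
  shows "0 \<le> t i" "t i \<le> 1"
proof -
  have "t 0 = 0" "t n = 1"
    using assms(1) unfolding admissible_subdivision_def by simp_all
  then show "0 \<le> t i" "t i \<le> 1"
    using admissible_subdivision_le[OF assms(1), of 0 i] admissible_subdivision_le[OF assms(1), of i n] assms(2)
    by simp_all
qed

lemma subdivision_sum_diff:
  assumes "admissible_subdivision \<U> g n t Us"
  shows "subdivision_sum (\<lambda>U y. G U y - F y) g n t Us = subdivision_sum G g n t Us - (F (g 1) - F (g 0))"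
proof -
  have "subdivision_sum (\<lambda>U y. G U y - F y) g n t Us =
          (\<Sum>i<n. (G (Us i) (g (t (Suc i))) - G (Us i) (g (t i))) - (F (g (t (Suc i))) - F (g (t i))))"
    unfolding subdivision_sum_def by (intro sum.cong) (simp_all add: algebra_simps)
  also have "\<dots> = subdivision_sum G g n t Us - (\<Sum>i<n. F (g (t (Suc i))) - F (g (t i)))"
    unfolding subdivision_sum_def by (rule sum_subtractf)
  also have "(\<Sum>i<n. F (g (t (Suc i))) - F (g (t i))) = F (g 1) - F (g 0)"
    using assms sum_lessThan_telescope[of "\<lambda>i. F (g (t i))" n] by (simp add: admissible_subdivision_def)
  finally show ?thesis .
qed

lemma admissible_subdivision_exists:
  assumes g: "pathin X g" and op: "\<And>U. U \<in> \<U> \<Longrightarrow> openin X U" and cov: "\<Union>\<U> = topspace X"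
  shows "\<exists>n t Us. admissible_subdivision \<U> g n t Us"
proof -
  have "\<forall>U\<in>\<U>. \<exists>T. open T \<and> {s \<in> {0..1}. g s \<in> U} = T \<inter> {0..1}"
  proof
    fix U assume "U \<in> \<U>"
    have "openin (top_of_set {0..1}) {s \<in> topspace (top_of_set {0..1::real}). g s \<in> U}"
      using openin_continuous_map_preimage[OF g[unfolded pathin_def] op[OF \<open>U \<in> \<U>\<close>]] .
    then show "\<exists>T. open T \<and> {s \<in> {0..1}. g s \<in> U} = T \<inter> {0..1}"
      by (simp add: openin_subtopology)
  qed
  from bchoice[OF this] obtain T where T: "\<forall>U\<in>\<U>. open (T U) \<and> {s \<in> {0..1}. g s \<in> U} = T U \<inter> {0..1}"
    by blast
  have cover01: "{0..1} \<subseteq> \<Union>(T ` \<U>)"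
  proof
    fix s :: real assume s: "s \<in> {0..1}"
    then have "g s \<in> \<Union>\<U>"
      using path_image_subset_topspace[OF g] cov by auto
    then obtain U where "U \<in> \<U>" "g s \<in> U"
      by blast
    then show "s \<in> \<Union>(T ` \<U>)"
      using T s by blast
  qed
  have "T ` \<U> \<noteq> {}"
    using cover01 by auto
  then obtain \<delta> where \<delta>: "0 < \<delta>" "\<And>S. S \<subseteq> {0..1} \<Longrightarrow> diameter S < \<delta> \<Longrightarrow> \<exists>B\<in>T ` \<U>. S \<subseteq> B"
    by (rule Lebesgue_number_lemma[OF compact_Icc _ cover01]) (use T in auto)
  obtain N :: nat where N: "1 / \<delta> < N"
    using reals_Archimedean2 by blast
  then have "0 < N"
    using \<delta>(1) by (metis divide_pos_pos gr0I less_numeral_extra(1) of_nat_0 order.asym)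
  have small: "1 / real N < \<delta>"
    using N \<delta>(1) \<open>0 < N\<close> by (simp add: divide_less_eq mult.commute)
  define t where "t i = real i / real N" for i
  have "\<forall>i\<in>{..<N}. \<exists>U. U \<in> \<U> \<and> g ` {t i..t (Suc i)} \<subseteq> U"
  proof
    fix i assume "i \<in> {..<N}"
    then have sub: "{t i..t (Suc i)} \<subseteq> {0..1}"
      using \<open>0 < N\<close> by (auto simp: t_def field_simps)
    have "t i \<le> t (Suc i)"
      by (simp add: t_def divide_right_mono)
    then have "diameter {t i..t (Suc i)} = 1 / real N"
      by (simp add: t_def add_divide_distrib)
    then obtain B where "B \<in> T ` \<U>" "{t i..t (Suc i)} \<subseteq> B"
      using \<delta>(2)[OF sub] small by auto
    then obtain U where U: "U \<in> \<U>" "{t i..t (Suc i)} \<subseteq> T U"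
      by blast
    have "g ` {t i..t (Suc i)} \<subseteq> U"
    proof
      fix y assume "y \<in> g ` {t i..t (Suc i)}"
      then obtain s where s: "s \<in> {t i..t (Suc i)}" "y = g s"
        by blast
      then have "s \<in> T U \<inter> {0..1}"
        using U sub by blast
      then show "y \<in> U"
        using T U(1) s by blast
    qed
    then show "\<exists>U. U \<in> \<U> \<and> g ` {t i..t (Suc i)} \<subseteq> U"
      using U(1) by blast
  qed
  from bchoice[OF this] obtain Us where "\<forall>i\<in>{..<N}. Us i \<in> \<U> \<and> g ` {t i..t (Suc i)} \<subseteq> Us i"
    by blast
  then have "admissible_subdivision \<U> g N t Us"
    using \<open>0 < N\<close> by (auto simp: admissible_subdivision_def t_def divide_right_mono)
  then show ?thesis
    by blast
qed

lemma closed_1form_locally_constant_differences: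
  assumes op: "\<And>V. V \<in> \<V> \<Longrightarrow> openin X V" and cov: "\<Union>\<V> = topspace X"
    and cont: "\<And>K. K \<in> \<V> \<Longrightarrow> continuous_map (subtopology X K) euclideanreal (\<lambda>y. G K y - F y)"
    and loc: "\<And>K L y. K \<in> \<V> \<Longrightarrow> L \<in> \<V> \<Longrightarrow> y \<in> K \<inter> L \<Longrightarrow>
                \<exists>N. openin X N \<and> y \<in> N \<and> N \<subseteq> K \<inter> L \<and> (\<forall>z\<in>N. G K z - G L z = G K y - G L y)"
  shows "closed_1form X \<V> (\<lambda>K y. G K y - F y)"
  unfolding closed_1form_def using op cov cont loc by simp

context homology_functional
begin

definition period_primitive :: "'a set \<Rightarrow> ('a \<Rightarrow> real) \<Rightarrow> bool" where
  "period_primitive U G \<longleftrightarrow>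
     (\<forall>y z d. y \<in> U \<and> singular_chain 1 (subtopology X U) d \<and>
        chain_boundary 1 d = frag_of (point_simplex z) - frag_of (point_simplex y) \<longrightarrow> G z = G y + period d)"

lemma period_primitive_subset:
  "period_primitive U G \<Longrightarrow> V \<subseteq> U \<Longrightarrow> period_primitive V G"
  unfolding period_primitive_def by (meson singular_chain_mono subsetD)

lemma period_primitive_segment:
  assumes G: "period_primitive U G" and g: "pathin X g"
    and ab: "0 \<le> a" "a \<le> b" "b \<le> 1" "g ` {a..b} \<subseteq> U"
  shows "G (g b) - G (g a) = period (frag_of (segment_simplex g a b))"
proof -
  have "singular_chain 1 (subtopology X U) (frag_of (segment_simplex g a b))"
    using singular_simplex_segment_simplex[OF g ab] by (simp add: singular_chain_of)
  moreover have "g a \<in> U"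
    using ab by auto
  ultimately show ?thesis
    using G chain_boundary_segment_simplex unfolding period_primitive_def by fastforce
qed

lemma subdivision_sum_period_primitive:
  assumes g: "pathin X g" and adm: "admissible_subdivision \<U> g n t Us"
    and G: "\<And>U. U \<in> \<U> \<Longrightarrow> period_primitive U (G U)"
  shows "subdivision_sum G g n t Us = period (frag_of (path_simplex g))"
proof -
  have t: "t 0 = 0" "t n = 1" "\<forall>i<n. t i \<le> t (Suc i)"
    and Us: "\<And>i. i < n \<Longrightarrow> Us i \<in> \<U> \<and> g ` {t i..t (Suc i)} \<subseteq> Us i"
    using adm by (auto simp: admissible_subdivision_def)
  have "subdivision_sum G g n t Us = (\<Sum>i<n. period (frag_of (segment_simplex g (t i) (t (Suc i)))))"
    unfolding subdivision_sum_def
  proof (rule sum.cong)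
    fix i assume "i \<in> {..<n}"
    then show "G (Us i) (g (t (Suc i))) - G (Us i) (g (t i)) = period (frag_of (segment_simplex g (t i) (t (Suc i))))"
      using period_primitive_segment[OF G g] Us t admissible_subdivision_range[OF adm] by simp
  qed simp
  also have "\<dots> = period (frag_of (segment_simplex g (t 0) (t n)))"
    using period_segment_subdivision[OF g, of t n] t by simp
  finally show ?thesis
    using t by (simp add: path_simplex_eq_segment_simplex)
qed

end

context homology_functional
begin

lemma local_period_primitive:
  assumes H: "homologically_locally_connected X" and x: "x \<in> topspace X"
  shows "\<exists>V G. openin X V \<and> x \<in> V \<and> period_primitive V G"
proof -
  obtain W where W: "nbhd_in X x W"
    and bound: "\<forall>z. singular_relcycle 1 (subtopology X W) {} z \<longrightarrow> singular_relboundary 1 X {} z"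
    using homologically_locally_connected_cycles_bound[OF H x] by blast
  obtain V where V: "nbhd_in X x V" "V \<subseteq> W"
    and joined: "\<forall>y\<in>V. \<forall>z\<in>V. singular_relboundary 0 (subtopology X W) {} (frag_of (point_simplex z) - frag_of (point_simplex y))"
    using homologically_locally_connected_points_homologous[OF H x W] by blast
  obtain U where U: "openin X U" "x \<in> U" "U \<subseteq> V"
    using V(1) by (auto simp: nbhd_in_def)
  define path_to where "path_to z c \<longleftrightarrow>
    singular_chain 1 (subtopology X W) c \<and> chain_boundary 1 c = frag_of (point_simplex z) - frag_of (point_simplex x)" for z c
  define G where "G z = period (SOME c. path_to z c)" for z
  have xV: "x \<in> V"
    using U by blast
  have "G z = G y + period d"
    if y: "y \<in> U" and d: "singular_chain 1 (subtopology X U) d"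
      "chain_boundary 1 d = frag_of (point_simplex z) - frag_of (point_simplex y)" for y z d
  proof -
    have dW: "singular_chain 1 (subtopology X W) d"
      using d(1) U(3) V(2) singular_chain_mono by blast
    have "singular_relboundary 0 (subtopology X W) {} (frag_of (point_simplex y) - frag_of (point_simplex x))"
      using joined xV y U(3) by blast
    then have "\<exists>c. path_to y c"
      by (simp add: path_to_def singular_boundary)
    define cy where "cy = (SOME c. path_to y c)"
    have cy: "path_to y cy"
      unfolding cy_def using \<open>\<exists>c. path_to y c\<close> by (rule someI_ex)
    have "path_to z (cy + d)"
      using cy dW d(2) by (simp add: path_to_def singular_chain_add chain_boundary_add)
    define cz where "cz = (SOME c. path_to z c)"
    have cz: "path_to z cz"
      unfolding cz_def using \<open>path_to z (cy + d)\<close> by (rule someI)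
    have "singular_relcycle 1 (subtopology X W) {} (cy + d - cz)"
      using cy cz dW d(2)
      by (simp add: path_to_def singular_cycle singular_chain_add singular_chain_diff chain_boundary_add chain_boundary_diff)
    then have "period (cy + d - cz) = 0"
      using bound period_relboundary by blast
    moreover have "singular_chain 1 X cy" "singular_chain 1 X d" "singular_chain 1 X cz"
      using cy cz dW unfolding path_to_def singular_chain_subtopology by blast+
    ultimately show ?thesis
      by (simp add: G_def flip: cy_def cz_def add: period_add period_diff singular_chain_add)
  qed
  then have "period_primitive U G"
    unfolding period_primitive_def by blast
  then show ?thesis
    using U by blast
qed

lemma period_primitives_difference_locally_constant:
  assumes H: "homologically_locally_connected X" and KL: "openin X K" "openin X L"
    and G: "period_primitive K G" and G': "period_primitive L G'" and y: "y \<in> K \<inter> L"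
  shows "\<exists>N. openin X N \<and> y \<in> N \<and> N \<subseteq> K \<inter> L \<and> (\<forall>z\<in>N. G z - G' z = G y - G' y)"
proof -
  have "nbhd_in X y (K \<inter> L)"
    using KL y openin_subset unfolding nbhd_in_def by blast
  moreover have yX: "y \<in> topspace X"
    using KL(1) y openin_subset by blast
  ultimately obtain V where V: "nbhd_in X y V" "V \<subseteq> K \<inter> L"
    and joined: "\<forall>y\<in>V. \<forall>z\<in>V. singular_relboundary 0 (subtopology X (K \<inter> L)) {} (frag_of (point_simplex z) - frag_of (point_simplex y))"
    using homologically_locally_connected_points_homologous[OF H] by blast
  obtain N where N: "openin X N" "y \<in> N" "N \<subseteq> V"
    using V(1) by (auto simp: nbhd_in_def)
  have "G z - G' z = G y - G' y" if z: "z \<in> N" for z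
  proof -
    obtain d where d: "singular_chain 1 (subtopology X (K \<inter> L)) d"
      "chain_boundary 1 d = frag_of (point_simplex z) - frag_of (point_simplex y)"
      using joined N z by (fastforce simp: singular_boundary)
    have "G z = G y + period d"
      using G y d singular_chain_mono[OF d(1), of K] unfolding period_primitive_def by blast
    moreover have "G' z = G' y + period d"
      using G' y d singular_chain_mono[OF d(1), of L] unfolding period_primitive_def by blast
    ultimately show ?thesis
      by simp
  qed
  then show ?thesis
    using N V(2) by blast
qed

lemma locally_finite_period_primitive_cover:
  assumes X: "paracompact_space X" and H: "homologically_locally_connected X"
  obtains \<V> G where "\<forall>V\<in>\<V>. openin X V" "\<Union>\<V> = topspace X" "locally_finite_in X \<V>"
    "\<forall>V\<in>\<V>. period_primitive V (G V)"
proof -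
  define \<U> where "\<U> = {V. openin X V \<and> (\<exists>G. period_primitive V G)}"
  have opens: "\<And>U. U \<in> \<U> \<Longrightarrow> openin X U"
    by (simp add: \<U>_def)
  have "\<Union>\<U> \<subseteq> topspace X"
    by (auto simp: \<U>_def dest: openin_subset)
  moreover have "topspace X \<subseteq> \<Union>\<U>"
  proof
    fix x assume "x \<in> topspace X"
    then obtain V G where "openin X V" "x \<in> V" "period_primitive V G"
      using local_period_primitive[OF H] by blast
    then show "x \<in> \<Union>\<U>"
      unfolding \<U>_def by blast
  qed
  ultimately have cover: "\<Union>\<U> = topspace X"
    by blast
  obtain \<V> where \<V>: "\<And>V. V \<in> \<V> \<Longrightarrow> openin X V" "\<Union>\<V> = topspace X"
    "\<And>V. V \<in> \<V> \<Longrightarrow> \<exists>U\<in>\<U>. V \<subseteq> U" "locally_finite_in X \<V>"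
    using paracompact_spaceE[OF X opens cover] by blast
  have "\<forall>V\<in>\<V>. \<exists>G. period_primitive V G"
  proof
    fix V assume "V \<in> \<V>"
    then obtain U where "U \<in> \<U>" "V \<subseteq> U"
      using \<V>(3) by blast
    then obtain G where "period_primitive U G"
      by (auto simp: \<U>_def)
    then show "\<exists>G. period_primitive V G"
      using period_primitive_subset \<open>V \<subseteq> U\<close> by blast
  qed
  from bchoice[OF this] obtain G where G: "\<forall>V\<in>\<V>. period_primitive V (G V)"
    by blast
  show ?thesis
    by (rule that[of \<V> G]) (use \<V> G in auto)
qed

lemma form_integral_is_loop_period:
  assumes op: "\<And>V. V \<in> \<V> \<Longrightarrow> openin X V" and cov: "\<Union>\<V> = topspace X"
    and G: "\<And>V. V \<in> \<V> \<Longrightarrow> period_primitive V (G V)"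
    and \<gamma>: "pathin X \<gamma>" "\<gamma> 0 = \<gamma> 1"
  shows "form_integral_is \<V> (\<lambda>K y. G K y - F y) \<gamma> (\<xi> (loop_class X \<gamma>))"
  unfolding form_integral_is_def
proof (intro conjI allI impI)
  show "\<exists>n t Us. admissible_subdivision \<V> \<gamma> n t Us"
    using admissible_subdivision_exists[OF \<gamma>(1) op cov] .
  have "chain_boundary 1 (frag_of (path_simplex \<gamma>)) = 0"
    unfolding path_simplex_eq_segment_simplex chain_boundary_segment_simplex using \<gamma>(2) by simp
  then have loop: "period (frag_of (path_simplex \<gamma>)) = \<xi> (loop_class X \<gamma>)"
    by (simp add: period_cycle loop_class_def)
  fix n t Us assume adm: "admissible_subdivision \<V> \<gamma> n t Us"
  have "subdivision_sum (\<lambda>K y. G K y - F y) \<gamma> n t Us = subdivision_sum G \<gamma> n t Us - (F (\<gamma> 1) - F (\<gamma> 0))"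
    by (rule subdivision_sum_diff[OF adm])
  also have "subdivision_sum G \<gamma> n t Us = period (frag_of (path_simplex \<gamma>))"
    by (rule subdivision_sum_period_primitive[OF \<gamma>(1) adm G])
  finally show "subdivision_sum (\<lambda>K y. G K y - F y) \<gamma> n t Us = \<xi> (loop_class X \<gamma>)"
    using loop \<gamma>(2) by simp
qed

end

theorem mainTheorem11:
  fixes X :: "'a topology" and \<xi> :: "'a chain set \<Rightarrow> real"
  assumes "paracompact_space X"
    and "Hausdorff_space X"
    and "homologically_locally_connected X"
    and "\<xi> \<in> hom (homology_group 1 X) real_add_group"
  shows "\<exists>\<U> f. closed_1form X \<U> f \<and>
           (\<forall>\<gamma>. pathin X \<gamma> \<and> \<gamma> 0 = \<gamma> 1 \<longrightarrow> form_integral_is \<U> f \<gamma> (\<xi> (loop_class X \<gamma>)))"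
proof -
  interpret homology_functional X \<xi>
    using assms(4) by unfold_locales
  obtain \<V> G where \<V>: "\<forall>V\<in>\<V>. openin X V" "\<Union>\<V> = topspace X" "locally_finite_in X \<V>"
    and G: "\<forall>V\<in>\<V>. period_primitive V (G V)"
    using locally_finite_period_primitive_cover[OF assms(1,3)] by blast
  have op: "\<And>V. V \<in> \<V> \<Longrightarrow> openin X V"
    using \<V>(1) by blast
  have loc: "\<exists>N. openin X N \<and> y \<in> N \<and> N \<subseteq> K \<inter> L \<and> (\<forall>z\<in>N. G K z - G L z = G K y - G L y)"
    if "K \<in> \<V>" "L \<in> \<V>" "y \<in> K \<inter> L" for K L y
    by (rule period_primitives_difference_locally_constant[OF assms(3)]) (use op G that in auto)
  obtain F where F: "\<And>K. K \<in> \<V> \<Longrightarrow> continuous_map (subtopology X K) euclideanreal (\<lambda>y. G K y - F y)"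
    using locally_constant_differences_correction[OF assms(1,2) op \<V>(2,3) loc] by blast
  have "closed_1form X \<V> (\<lambda>K y. G K y - F y)"
    by (rule closed_1form_locally_constant_differences[OF op \<V>(2) F loc])
  moreover have "form_integral_is \<V> (\<lambda>K y. G K y - F y) \<gamma> (\<xi> (loop_class X \<gamma>))"
    if "pathin X \<gamma>" "\<gamma> 0 = \<gamma> 1" for \<gamma>
    by (rule form_integral_is_loop_period[OF op \<V>(2) _ that]) (use G in auto)
  ultimately show ?thesis
    by blast
qed

end
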